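(* Let $k\ge2$, $n\ge1$, $A=\{0<1<\cdots<k-1\}$, let $\alpha=0\,1\,2\cdots(k-1)\in A^{k}$ and $v=\alpha^{k^{n-1}}$. Let $M$ be the unique multiset of necklaces with $BW(M)=v$, and let $T=T(M)$ be its table. Then $T$ has exactly $n$ columns and its rows, from top to bottom, are the $n$-digit base-$k$ representations of $0,1,\dots,k^{n}-1$ in increasing order. Moreover $M$ is the set of necklaces of all Lyndon words over $A$ whose length divides $n$, and the rows of $T$ whose roots are Lyndon words occur in $T$ in lexicographic order.
   Context: Words are compared lexicographically (a proper prefix precedes the longer word). A word is primitive if it is not a proper power of another word; the root of a word $w$ is the shortest $r$ with $w=r^{t}$, $t\ge1$. A necklace is the set of conjugates ($xy\sim yx$) of a primitive word; its Lyndon word is its lexicographically least element. For a finite multiset $M$ of necklaces, with $l$ the lcm of their lengths, the table $T(M)$ is the lexicographically sorted list (as rows) of all words $u^{l/|u|}$, $u$ ranging over the words of each necklace of $M$ (with multiplicity), and $BW(M)$ is the last column of $T(M)$ read from top to bottom. It is known that $BW$ is a bijection from finite multisets of necklaces over $A$ onto $A^{*}$. *)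

theory Defs
  imports Main "HOL-Library.Multiset" "HOL-Library.List_Lexorder"
begin

text \<open>Words over the alphabet are lists of naturals; the order on words is the
lexicographic order of List_Lexorder (a proper prefix precedes the longer word).\<close>

definition wpow :: "'a list \<Rightarrow> nat \<Rightarrow> 'a list" where
  "wpow u t = concat (replicate t u)"

definition primitive :: "'a list \<Rightarrow> bool" where
  "primitive w \<longleftrightarrow> w \<noteq> [] \<and> \<not> (\<exists>r t. t \<ge> 2 \<and> w = wpow r t)"

definition root :: "'a list \<Rightarrow> 'a list" where
  "root w = (ARG_MIN length r. \<exists>t\<ge>1. w = wpow r t)"

definition conjugate :: "'a list \<Rightarrow> 'a list \<Rightarrow> bool" where
  "conjugate u v \<longleftrightarrow> (\<exists>x y. u = x @ y \<and> v = y @ x)"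

definition necklace_of :: "'a list \<Rightarrow> 'a list set" where
  "necklace_of w = {u. conjugate w u}"

definition is_necklace :: "'a list set \<Rightarrow> bool" where
  "is_necklace N \<longleftrightarrow> (\<exists>w. primitive w \<and> N = necklace_of w)"

definition lyndon :: "'a::linorder list \<Rightarrow> bool" where
  "lyndon w \<longleftrightarrow> primitive w \<and> (\<forall>u\<in>necklace_of w. w \<le> u)"

definition table_lcm :: "'a list set multiset \<Rightarrow> nat" where
  "table_lcm M = Lcm {length u | u N. N \<in># M \<and> u \<in> N}"

definition table_rows :: "'a list set multiset \<Rightarrow> 'a list multiset" where
  "table_rows M = (\<Sum>N\<in>#M. image_mset (\<lambda>u. wpow u (table_lcm M div length u)) (mset_set N))"

definition table :: "'a::linorder list set multiset \<Rightarrow> 'a list list" where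
  "table M = sorted_list_of_multiset (table_rows M)"

definition BW :: "'a::linorder list set multiset \<Rightarrow> 'a list" where
  "BW M = map last (table M)"

definition digits :: "nat \<Rightarrow> nat \<Rightarrow> nat \<Rightarrow> nat list" where
  "digits k n m = map (\<lambda>i. m div k ^ (n - 1 - i) mod k) [0..<n]"

end

(* The table T(M) is sorted and its multiset of rows is closed under rotation, so the
   LF-property of the Burrows-Wheeler transform holds: moving the last letter of row j to the
   front gives row LF(j), and LF is computed from the last column alone. For the last column
   (0 1 ... k-1)^(k^(n-1)) the LF-map is j -> (j mod k) k^(n-1) + j div k, the cyclic shift of
   n-digit base-k numerals. Iterating it shows that, read backwards from its end, row j spells
   the base-k digits of j. The shift has order n, so every row is invariant under rotation by n;
   hence the row length l divides n, and l < n would make rows 0 and k^l equal. So the rows are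
   the k^n words of length n, each occurring once, which determines M. Finally, if a is a Lyndon
   word and b < a then b a < a b, so powers of Lyndon words of equal length are ordered like
   their roots. *)

theory Submission
  imports Defs
begin

section \<open>Powers and periods of words\<close>

lemma wpow_0 [simp]: "wpow u 0 = []"
  by (simp add: wpow_def)

lemma wpow_Nil [simp]: "wpow [] t = []"
  by (simp add: wpow_def)

lemma wpow_Suc: "wpow u (Suc t) = u @ wpow u t"
  by (simp add: wpow_def)

lemma length_wpow [simp]: "length (wpow u t) = t * length u"
  by (simp add: wpow_def length_concat sum_list_replicate)

lemma set_wpow_subset: "set (wpow u t) \<subseteq> set u"
  by (auto simp: wpow_def)

lemma wpow_add: "wpow u (a + b) = wpow u a @ wpow u b"
  by (simp add: wpow_def replicate_add)

lemma wpow_mult: "wpow u (a * b) = wpow (wpow u a) b"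
  by (induction b) (simp_all add: wpow_Suc wpow_add)

lemma take_wpow: "0 < t \<Longrightarrow> take (length u) (wpow u t) = u"
  by (cases t) (simp_all add: wpow_Suc)

lemma nth_wpow: "i < t * length u \<Longrightarrow> wpow u t ! i = u ! (i mod length u)"
proof (induction t arbitrary: i)
  case (Suc t)
  then show ?case
    by (cases "i < length u") (simp_all add: wpow_Suc nth_append le_mod_geq)
qed simp

lemma filter_wpow: "filter P (wpow u t) = wpow (filter P u) t"
  by (simp add: wpow_def filter_concat)

lemma rotate_wpow: "rotate j (wpow u t) = wpow (rotate j u) t"
proof (rule nth_equalityI)
  fix i assume "i < length (rotate j (wpow u t))"
  then have i: "i < t * length u" by simp
  then have "0 < t * length u" by linarith
  then have "0 < length u" by simp
  have "rotate j (wpow u t) ! i = u ! ((j + i) mod (t * length u) mod length u)"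
    using i \<open>0 < t * length u\<close> by (simp add: nth_rotate nth_wpow)
  also have "\<dots> = u ! ((j + i) mod length u)"
    by (simp add: mod_mod_cancel)
  also have "\<dots> = wpow (rotate j u) t ! i"
    using i \<open>0 < length u\<close> by (simp add: nth_rotate nth_wpow mod_add_right_eq)
  finally show "rotate j (wpow u t) ! i = wpow (rotate j u) t ! i" .
qed simp

lemma rotate_mult_self: "rotate d u = u \<Longrightarrow> rotate (d * c) u = u"
  by (induction c) (simp_all add: rotate_rotate[symmetric] add.commute)

lemma rotate_gcd_self:
  assumes "rotate a u = u" and "rotate b u = u"
  shows "rotate (gcd a b) u = u"
proof (cases "a = 0")
  case False
  then obtain x y where xy: "a * x = b * y + gcd a b" using bezout_nat by blast
  have "u = rotate (a * x) u" using rotate_mult_self[OF assms(1)] by simp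
  also have "\<dots> = rotate (gcd a b) (rotate (b * y) u)" by (simp add: xy rotate_rotate add.commute)
  finally show ?thesis using rotate_mult_self[OF assms(2)] by simp
qed (use assms in simp)

lemma rotate_self_nth_mod:
  assumes "rotate d u = u" and "i < length u"
  shows "u ! i = u ! (i mod d)"
proof -
  have "i mod d < length u"
    using assms(2) mod_less_eq_dividend[of i d] by linarith
  then have "u ! (i mod d) = rotate (d * (i div d)) u ! (i mod d)"
    using rotate_mult_self[OF assms(1)] by simp
  also have "\<dots> = u ! i"
    using \<open>i mod d < length u\<close> assms(2) by (simp add: nth_rotate add.commute)
  finally show ?thesis by simp
qed

lemma rotate_self_eq_wpow:
  assumes "rotate d u = u" and "0 < d" and "d dvd length u"
  shows "u = wpow (take d u) (length u div d)"
proof (cases "u = []")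
  case False
  then have "d \<le> length u"
    using assms(3) by (simp add: dvd_imp_le)
  then have len: "length (wpow (take d u) (length u div d)) = length u"
    using assms(3) by (simp add: min_def)
  show ?thesis
  proof (rule nth_equalityI)
    fix i assume i: "i < length u"
    have "wpow (take d u) (length u div d) ! i = take d u ! (i mod d)"
      using i len \<open>d \<le> length u\<close> by (simp add: nth_wpow min_def)
    also have "\<dots> = u ! i"
      using assms(2) rotate_self_nth_mod[OF assms(1) i] by simp
    finally show "u ! i = wpow (take d u) (length u div d) ! i" by simp
  qed (use len in simp)
qed simp

lemma primitive_rotate_self_dvd:
  assumes "primitive u" and "rotate g u = u"
  shows "length u dvd g"
proof -
  define d where "d = gcd g (length u)"
  have "0 < length u" using assms(1) by (simp add: primitive_def)
  then have d: "0 < d" "d dvd length u" by (simp_all add: d_def)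
  have "rotate d u = u"
    unfolding d_def by (rule rotate_gcd_self[OF assms(2)]) simp
  then have "u = wpow (take d u) (length u div d)"
    using d by (rule rotate_self_eq_wpow)
  then have "\<not> 2 \<le> length u div d"
    using assms(1) unfolding primitive_def by blast
  moreover have "0 < length u div d"
    using d \<open>0 < length u\<close> by (simp add: dvd_imp_le div_greater_zero_iff)
  ultimately have "length u div d = 1" by linarith
  then have "d = length u"
    using d(2) by (metis dvd_mult_div_cancel mult.right_neutral)
  then show ?thesis by (metis d_def gcd_dvd1)
qed

lemma primitive_wpow_rotate_self_dvd:
  assumes "primitive u" and "0 < t" and "rotate g (wpow u t) = wpow u t"
  shows "length u dvd g"
proof -
  have "rotate g u = u"
    using take_wpow[OF assms(2), of "rotate g u"] take_wpow[OF assms(2), of u] assms(3)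
    by (simp add: rotate_wpow)
  with assms(1) show ?thesis by (rule primitive_rotate_self_dvd)
qed

lemma primitive_wpow_inject:
  assumes "primitive u" "primitive w" "0 < a" "0 < b" and eq: "wpow u a = wpow w b"
  shows "u = w"
proof -
  have "rotate (length w) (wpow u a) = wpow u a"
    unfolding eq by (simp add: rotate_wpow)
  then have "length u dvd length w"
    using assms by (intro primitive_wpow_rotate_self_dvd)
  moreover have "rotate (length u) (wpow w b) = wpow w b"
    unfolding eq[symmetric] by (simp add: rotate_wpow)
  then have "length w dvd length u"
    using assms by (intro primitive_wpow_rotate_self_dvd)
  ultimately have "length u = length w" by (rule dvd_antisym)
  then show ?thesis
    using eq take_wpow[OF \<open>0 < a\<close>, of u] take_wpow[OF \<open>0 < b\<close>, of w] by metis
qed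

lemma root_wpow:
  assumes "primitive u" and "0 < t"
  shows "root (wpow u t) = u"
proof -
  define P where "P r \<longleftrightarrow> (\<exists>s\<ge>1. wpow u t = wpow r s)" for r
  have "P u" using assms(2) by (auto simp: P_def intro!: exI[of _ t])
  moreover have "root (wpow u t) = arg_min length P"
    unfolding root_def P_def by (rule refl)
  ultimately have "P (root (wpow u t))"
    and root_min: "\<And>r. P r \<Longrightarrow> length (root (wpow u t)) \<le> length r"
    using arg_min_nat_lemma[of P u length] by auto
  then obtain s where s: "s \<ge> 1" "wpow u t = wpow (root (wpow u t)) s"
    by (auto simp: P_def)
  have "wpow u t \<noteq> []"
    using assms by (simp add: primitive_def flip: length_greater_0_conv)
  then have "root (wpow u t) \<noteq> []"
    using s by auto
  moreover have "\<not> (\<exists>r c. 2 \<le> c \<and> root (wpow u t) = wpow r c)"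
  proof
    assume "\<exists>r c. 2 \<le> c \<and> root (wpow u t) = wpow r c"
    then obtain r c where rc: "2 \<le> c" "root (wpow u t) = wpow r c" by blast
    then have "P r" using s by (auto simp: P_def wpow_mult[symmetric] intro!: exI[of _ "c * s"])
    then have "length (root (wpow u t)) \<le> length r" by (rule root_min)
    moreover have "0 < length r"
      using rc \<open>root (wpow u t) \<noteq> []\<close> by auto
    then have "length r < length (wpow r c)"
      using rc(1) mult_less_mono1[of 1 c "length r"] by simp
    ultimately show False using rc(2) by simp
  qed
  ultimately have "primitive (root (wpow u t))" by (simp add: primitive_def)
  moreover have "0 < s" using s(1) by simp
  ultimately show ?thesis
    using primitive_wpow_inject[OF _ assms(1) _ assms(2)] s(2) by metis
qed

section \<open>Necklaces and Lyndon words\<close>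

lemma conjugate_iff_rotate: "conjugate u v \<longleftrightarrow> (\<exists>i. v = rotate i u)"
proof
  assume "conjugate u v"
  then show "\<exists>i. v = rotate i u"
    unfolding conjugate_def by (metis rotate_append)
next
  assume "\<exists>i. v = rotate i u"
  then show "conjugate u v"
    unfolding conjugate_def by (metis append_take_drop_id rotate_drop_take)
qed

lemma conjugate_sym: "conjugate u v \<Longrightarrow> conjugate v u"
  unfolding conjugate_def by blast

lemma conjugate_trans: "conjugate u v \<Longrightarrow> conjugate v w \<Longrightarrow> conjugate u w"
  unfolding conjugate_iff_rotate by (metis rotate_rotate)

lemma necklace_of_eq_range_rotate: "necklace_of w = range (\<lambda>i. rotate i w)"
  by (auto simp: necklace_of_def conjugate_iff_rotate)

lemma self_in_necklace_of: "w \<in> necklace_of w"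
  unfolding necklace_of_eq_range_rotate by (metis rangeI rotate0 id_apply)

lemma necklace_of_eq_if_mem: "u \<in> necklace_of w \<Longrightarrow> necklace_of u = necklace_of w"
  unfolding necklace_of_def by (blast intro: conjugate_sym conjugate_trans)

lemma finite_necklace_of: "finite (necklace_of w)"
proof (rule finite_subset)
  show "necklace_of w \<subseteq> {xs. set xs \<subseteq> set w \<and> length xs = length w}"
    unfolding necklace_of_eq_range_rotate by auto
qed (simp add: finite_lists_length_eq)

lemma rotate1_image_necklace_of: "rotate1 ` necklace_of w = necklace_of w"
proof (rule endo_inj_surj)
  show "rotate1 ` necklace_of w \<subseteq> necklace_of w"
    unfolding necklace_of_eq_range_rotate by (auto simp flip: rotate_Suc)
qed (auto simp: finite_necklace_of intro: inj_on_subset[OF inj_rotate1])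

lemma primitive_rotate:
  assumes "primitive w"
  shows "primitive (rotate i w)"
proof -
  obtain j where j: "w = rotate j (rotate i w)"
    using conjugate_sym[of w "rotate i w"] by (auto simp: conjugate_iff_rotate)
  have "rotate i w \<noteq> wpow r t" if "2 \<le> t" for r t
    using assms that j by (auto simp: primitive_def rotate_wpow)
  then show ?thesis
    using assms by (auto simp: primitive_def)
qed

lemma primitive_mem_necklace_of: "primitive w \<Longrightarrow> u \<in> necklace_of w \<Longrightarrow> primitive u"
  unfolding necklace_of_eq_range_rotate by (auto intro: primitive_rotate)

lemma lyndon_Min_necklace_of:
  assumes "primitive w"
  shows "lyndon (Min (necklace_of w))"
proof -
  have Min: "Min (necklace_of w) \<in> necklace_of w"
    using finite_necklace_of self_in_necklace_of by (metis Min_in empty_iff)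
  then have "necklace_of (Min (necklace_of w)) = necklace_of w"
    by (rule necklace_of_eq_if_mem)
  then show ?thesis
    unfolding lyndon_def using primitive_mem_necklace_of[OF assms Min]
    by (auto intro: Min_le finite_necklace_of)
qed

lemma append_less_append_left_iff [simp]: "p @ u < p @ v \<longleftrightarrow> u < (v :: 'a::linorder list)"
  by (induction p) auto

lemma append_less_append_same_length:
  fixes u v :: "'a::linorder list"
  shows "length u = length v \<Longrightarrow> u < v \<Longrightarrow> u @ x < v @ y"
  by (induction u v rule: list_induct2) auto

lemma le_if_append_less_same_length:
  fixes u v :: "'a::linorder list"
  assumes "length u = length v" and "u @ x < v @ y"
  shows "u \<le> v"
proof (rule ccontr)
  assume "\<not> u \<le> v"
  then have "v @ y < u @ x"
    using assms(1) by (intro append_less_append_same_length) simp_all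
  with assms(2) show False by simp
qed

lemma append_less_append_same_length_iff:
  fixes u v :: "'a::linorder list"
  assumes "length u = length v"
  shows "u @ x < v @ x \<longleftrightarrow> u < v"
proof
  assume "u @ x < v @ x"
  then have "u \<le> v" and "u \<noteq> v"
    using le_if_append_less_same_length[OF assms] by auto
  then show "u < v" by simp
qed (rule append_less_append_same_length[OF assms])

lemma append_le_append_same_length_iff:
  fixes u v :: "'a::linorder list"
  assumes "length u = length v"
  shows "u @ x \<le> v @ x \<longleftrightarrow> u \<le> v"
  using append_less_append_same_length_iff[OF assms[symmetric]] by (simp add: not_less[symmetric])

lemma lyndon_append_less_commute:
  fixes x y :: "'a::linorder list"
  assumes "lyndon y" and "x < y" and "x \<noteq> []"
  shows "x @ y < y @ x"
proof -
  have "(x, y) \<in> lexord {(a, b). a < b}"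
    using \<open>x < y\<close> by (simp add: list_less_def)
  then consider (prefix) z where "y = x @ z" "z \<noteq> []"
    | (differ) u a b v w where "a < b" "x = u @ a # v" "y = u @ b # w"
    unfolding lexord_def by blast
  then show ?thesis
  proof cases
    case (prefix z)
    have "z @ x \<in> necklace_of y"
      using prefix by (auto simp: necklace_of_def conjugate_def)
    then have "y \<le> z @ x"
      using assms(1) by (simp add: lyndon_def)
    moreover have "z @ x \<noteq> y"
    proof
      assume "z @ x = y"
      then have "rotate (length x) y = y"
        using prefix by (simp add: rotate_append)
      then have "length y dvd length x"
        using assms(1) by (intro primitive_rotate_self_dvd) (simp add: lyndon_def)
      then show False
        using prefix \<open>x \<noteq> []\<close> by (auto dest: dvd_imp_le)
    qed
    ultimately show ?thesis
      using prefix by simp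
  qed simp
qed

lemma wpow_append_less_commute_left:
  fixes u v :: "'a::linorder list"
  assumes "u @ v < v @ u" and "0 < a"
  shows "wpow u a @ v < v @ wpow u a"
  using assms(2)
proof (induction a)
  case (Suc a)
  show ?case
  proof (cases "a = 0")
    case False
    then have "u @ wpow u a @ v < u @ v @ wpow u a"
      using Suc.IH by simp
    also have "\<dots> < v @ u @ wpow u a"
      using append_less_append_same_length[OF _ assms(1)] by simp
    finally show ?thesis by (simp add: wpow_Suc)
  qed (use assms in \<open>simp add: wpow_Suc\<close>)
qed simp

lemma wpow_append_less_commute_right:
  fixes u v :: "'a::linorder list"
  assumes "u @ v < v @ u" and "0 < b"
  shows "u @ wpow v b < wpow v b @ u"
  using assms(2)
proof (induction b)
  case (Suc b)
  show ?case
  proof (cases "b = 0")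
    case False
    have "u @ v @ wpow v b < v @ u @ wpow v b"
      using append_less_append_same_length[OF _ assms(1)] by simp
    also have "\<dots> < v @ wpow v b @ u"
      using Suc.IH False by simp
    finally show ?thesis by (simp add: wpow_Suc)
  qed (use assms in \<open>simp add: wpow_Suc\<close>)
qed simp

lemma lyndon_wpow_less_imp_less:
  fixes a b :: "'a::linorder list"
  assumes "lyndon a" and "b \<noteq> []" and "0 < p" and "0 < q"
    and same_length: "length (wpow a p) = length (wpow b q)"
    and less: "wpow a p < wpow b q"
  shows "a < b"
proof (rule ccontr)
  assume "\<not> a < b"
  moreover have "a \<noteq> b"
    using less same_length \<open>b \<noteq> []\<close> by auto
  ultimately have "b < a" by simp
  then have "b @ a < a @ b"
    by (rule lyndon_append_less_commute[OF assms(1) _ assms(2)])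
  then have "wpow b q @ wpow a p < wpow a p @ wpow b q"
    using \<open>0 < p\<close> \<open>0 < q\<close> by (intro wpow_append_less_commute_right wpow_append_less_commute_left)
  then have "wpow b q \<le> wpow a p"
    using same_length by (intro le_if_append_less_same_length) simp
  with less show False by simp
qed

section \<open>The LF-mapping of a sorted list closed under rotation\<close>

lemma length_filter_mono:
  "(\<And>y. y \<in> set xs \<Longrightarrow> P y \<Longrightarrow> Q y)
    \<Longrightarrow> length (filter P xs) \<le> length (filter Q xs)"
  by (induction xs) auto

lemma length_filter_disj:
  "(\<And>y. y \<in> set xs \<Longrightarrow> \<not> (P y \<and> Q y))
    \<Longrightarrow> length (filter (\<lambda>y. P y \<or> Q y) xs) = length (filter P xs) + length (filter Q xs)"
  by (induction xs) auto

lemma length_filter_eq_if_mset_map_eq: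
  assumes "mset (map f xs) = mset xs"
  shows "length (filter P xs) = length (filter (\<lambda>y. P (f y)) xs)"
proof -
  have "length (filter P xs) = size (filter_mset P (mset xs))"
    by (simp flip: mset_filter)
  also have "\<dots> = size (filter_mset P (mset (map f xs)))"
    by (simp only: assms)
  also have "\<dots> = length (filter P (map f xs))"
    by (simp only: size_mset flip: mset_filter)
  also have "\<dots> = length (filter (\<lambda>y. P (f y)) xs)"
    by (simp add: filter_map comp_def)
  finally show ?thesis .
qed

lemma sorted_nth_eq_if_between:
  fixes xs :: "'a::linorder list"
  assumes "sorted xs"
    and "length (filter (\<lambda>y. y < x) xs) \<le> p" and "p < length (filter (\<lambda>y. y \<le> x) xs)"
  shows "p < length xs \<and> xs ! p = x"
  using assms
proof (induction xs arbitrary: p)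
  case (Cons a xs)
  consider "a < x" | "a = x" | "x < a" by fastforce
  then show ?case
  proof cases
    case 1
    with Cons.prems obtain p' where p: "p = Suc p'" by (cases p) auto
    then have "p' < length xs \<and> xs ! p' = x"
      using 1 Cons by (intro Cons.IH) (auto simp: less_imp_le)
    then show ?thesis using p by simp
  next
    case 2
    with Cons.prems(1) have "filter (\<lambda>y. y < x) xs = []" by (auto simp: filter_empty_conv)
    with 2 Cons show ?thesis by (cases p) auto
  next
    case 3
    with Cons.prems(1) have "filter (\<lambda>y. y \<le> x) (a # xs) = []" by (auto simp: filter_empty_conv)
    with Cons.prems(3) show ?thesis by simp
  qed
qed simp

lemma image_mset_rotate_eq_if_rotate1:
  assumes "image_mset rotate1 A = A"
  shows "image_mset (rotate c) A = A"
proof (induction c)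
  case (Suc c)
  have "image_mset (rotate (Suc c)) A = image_mset (rotate1 \<circ> rotate c) A"
    by (rule image_mset_cong) simp
  also have "\<dots> = image_mset rotate1 (image_mset (rotate c) A)"
    by (simp only: multiset.map_comp)
  finally show ?case by (simp only: Suc.IH assms)
qed simp

lemma rotate_length_minus_1:
  assumes "xs \<noteq> []"
  shows "rotate (length xs - 1) xs = last xs # butlast xs"
  using rotate_append[of "butlast xs" "[last xs]"] by (simp add: assms)

lemma mset_map_last_to_front:
  assumes "image_mset rotate1 (mset L) = mset L" and "\<forall>y\<in>set L. length y = l" and "0 < l"
  shows "mset (map (\<lambda>y. last y # butlast y) L) = mset L"
proof -
  have "last y # butlast y = rotate (l - 1) y" if "y \<in> set L" for y
    using rotate_length_minus_1[of y] assms(2,3) that by auto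
  then have "mset (map (\<lambda>y. last y # butlast y) L) = image_mset (rotate (l - 1)) (mset L)"
    by (auto intro: image_mset_cong)
  then show ?thesis
    using image_mset_rotate_eq_if_rotate1[OF assms(1)] by simp
qed

definition LF :: "'a::linorder list \<Rightarrow> nat \<Rightarrow> nat" where
  "LF b j = length (filter (\<lambda>a. a < b ! j) b) + length (filter (\<lambda>a. a = b ! j) (take j b))"

context
  fixes L :: "'a::linorder list list" and l :: nat
  assumes sorted_L: "sorted L" and length_rows: "\<forall>y\<in>set L. length y = l" and "0 < l"
    and rotate1_closed: "image_mset rotate1 (mset L) = mset L"
begin

lemma length_filter_last_to_front:
  "length (filter P L) = length (filter (\<lambda>y. P (last y # butlast y)) L)"
  using mset_map_last_to_front[OF rotate1_closed length_rows \<open>0 < l\<close>]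
  by (rule length_filter_eq_if_mset_map_eq)

lemma
  assumes "x \<in> set L" and "y \<in> set L" and "last x = last y"
  shows less_row_iff_less_butlast: "x < y \<longleftrightarrow> butlast x < butlast y"
    and le_row_iff_le_butlast: "x \<le> y \<longleftrightarrow> butlast x \<le> butlast y"
proof -
  have "x \<noteq> []" and "y \<noteq> []"
    using assms(1,2) length_rows \<open>0 < l\<close> by auto
  then have "x = butlast x @ [last y]" and "y = butlast y @ [last y]"
    using assms(3) by (metis append_butlast_last_id)+
  moreover have "length (butlast x) = length (butlast y)"
    using assms(1,2) length_rows by simp
  ultimately show "x < y \<longleftrightarrow> butlast x < butlast y" and "x \<le> y \<longleftrightarrow> butlast x \<le> butlast y"
    by (metis append_less_append_same_length_iff, metis append_le_append_same_length_iff)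
qed

lemma LF_lower_bound:
  assumes j: "j < length L"
  shows "length (filter (\<lambda>y. y < last (L ! j) # butlast (L ! j)) L) \<le> LF (map last L) j"
proof -
  define c where "c = last (L ! j)"
  define b where "b = butlast (L ! j)"
  let ?P = "\<lambda>y. last y = c \<and> butlast y < b"
  have "filter ?P (drop j L) = []"
  proof (rule filter_False, intro ballI notI)
    fix y assume y: "y \<in> set (drop j L)" and "?P y"
    then have "y < L ! j"
      using less_row_iff_less_butlast[of y "L ! j"] j by (simp add: b_def c_def in_set_dropD)
    moreover have "L ! j \<le> y"
      using y j sorted_L by (auto simp: in_set_conv_nth intro: sorted_nth_mono)
    ultimately show False by simp
  qed
  moreover have "filter ?P L = filter ?P (take j L) @ filter ?P (drop j L)"
    by (simp flip: filter_append)
  ultimately have drop: "filter ?P L = filter ?P (take j L)"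
    by simp
  have "length (filter (\<lambda>y. y < last (L ! j) # butlast (L ! j)) L)
      = length (filter (\<lambda>y. last y < c \<or> ?P y) L)"
    by (subst length_filter_last_to_front) (simp add: b_def c_def)
  also have "\<dots> = length (filter (\<lambda>y. last y < c) L) + length (filter ?P (take j L))"
    by (subst length_filter_disj) (auto simp: drop)
  also have "length (filter ?P (take j L)) \<le> length (filter (\<lambda>y. last y = c) (take j L))"
    by (rule length_filter_mono) simp
  finally show ?thesis
    using j by (simp add: LF_def c_def take_map comp_def)
qed

lemma LF_upper_bound:
  assumes j: "j < length L"
  shows "LF (map last L) j < length (filter (\<lambda>y. y \<le> last (L ! j) # butlast (L ! j)) L)"
proof -
  define c where "c = last (L ! j)"
  define b where "b = butlast (L ! j)"
  let ?P = "\<lambda>y. last y = c \<and> butlast y \<le> b"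
  have split: "filter ?P L = filter ?P (take (Suc j) L) @ filter ?P (drop (Suc j) L)"
    by (simp flip: filter_append)
  have "LF (map last L) j
      < length (filter (\<lambda>y. last y < c) L) + length (filter (\<lambda>y. last y = c) (take (Suc j) L))"
    using j by (simp add: LF_def c_def take_map comp_def take_Suc_conv_app_nth)
  also have "filter (\<lambda>y. last y = c) (take (Suc j) L) = filter ?P (take (Suc j) L)"
  proof (rule filter_cong)
    fix y assume y: "y \<in> set (take (Suc j) L)"
    then have "y \<le> L ! j"
      using j sorted_L by (auto simp: in_set_conv_nth less_Suc_eq_le intro: sorted_nth_mono)
    then show "last y = c \<longleftrightarrow> ?P y"
      using le_row_iff_le_butlast[of y "L ! j"] y j by (auto simp: b_def c_def dest: in_set_takeD)
  qed simp
  also have "length (filter ?P (take (Suc j) L)) \<le> length (filter ?P L)"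
    by (subst split) simp
  also have "length (filter (\<lambda>y. last y < c) L) + length (filter ?P L)
      = length (filter (\<lambda>y. last y < c \<or> ?P y) L)"
    by (rule length_filter_disj[symmetric]) auto
  also have "\<dots> = length (filter (\<lambda>y. y \<le> last (L ! j) # butlast (L ! j)) L)"
    by (subst (2) length_filter_last_to_front) (auto simp: b_def c_def)
  finally show ?thesis by simp
qed

lemma LF_sorted_rotation_closed:
  assumes "j < length L"
  shows "LF (map last L) j < length L \<and> L ! LF (map last L) j = last (L ! j) # butlast (L ! j)"
  using sorted_nth_eq_if_between[OF sorted_L LF_lower_bound[OF assms] LF_upper_bound[OF assms]] .

end

section \<open>Tables of multisets of necklaces\<close>

lemma mset_table [simp]: "mset (table M) = table_rows M"
  by (simp add: table_def)

lemma set_table: "set (table M) = set_mset (table_rows M)"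
  by (metis mset_table set_mset_mset)

lemma sorted_table: "sorted (table M)"
  by (simp add: table_def)

lemma mem_table_rowsE:
  assumes "x \<in># table_rows M"
  obtains N u where "N \<in># M" and "u \<in> N" and "x = wpow u (table_lcm M div length u)"
proof -
  obtain N where N: "N \<in># M" "x \<in># image_mset (\<lambda>u. wpow u (table_lcm M div length u)) (mset_set N)"
    using assms unfolding table_rows_def by (induction M) auto
  then obtain u where "u \<in># mset_set N" "x = wpow u (table_lcm M div length u)"
    by auto
  moreover have "u \<in> N"
    using \<open>u \<in># mset_set N\<close> by (cases "finite N") auto
  ultimately show thesis using N(1) that by blast
qed

lemma wpow_mem_table_rows:
  assumes "N \<in># M" and "finite N" and "u \<in> N"
  shows "wpow u (table_lcm M div length u) \<in># table_rows M"
proof -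
  obtain M' where "M = add_mset N M'"
    using assms(1) by (metis multi_member_split)
  then show ?thesis
    using assms(2,3) by (simp add: table_rows_def)
qed

lemma length_dvd_table_lcm: "N \<in># M \<Longrightarrow> u \<in> N \<Longrightarrow> length u dvd table_lcm M"
  unfolding table_lcm_def by (rule dvd_Lcm) blast

lemma length_table_row: "x \<in> set (table M) \<Longrightarrow> length x = table_lcm M"
  unfolding set_table by (auto elim!: mem_table_rowsE dest: length_dvd_table_lcm)

lemma primitive_if_mem_necklace:
  "\<forall>N\<in>#M. is_necklace N \<Longrightarrow> N \<in># M \<Longrightarrow> u \<in> N \<Longrightarrow> primitive u"
  by (auto simp: is_necklace_def intro: primitive_mem_necklace_of)

lemma eq_necklace_of_if_mem:
  assumes "\<forall>N\<in>#M. is_necklace N" and "N \<in># M" and "u \<in> N"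
  shows "N = necklace_of u"
proof -
  obtain w where "N = necklace_of w"
    using assms(1,2) by (auto simp: is_necklace_def)
  with assms(3) show ?thesis
    by (simp add: necklace_of_eq_if_mem)
qed

lemma table_lcm_pos:
  assumes "\<forall>N\<in>#M. is_necklace N"
  shows "0 < table_lcm M"
proof -
  have "{length u | u N. N \<in># M \<and> u \<in> N} \<subseteq> length ` \<Union> (set_mset M)"
    by blast
  moreover have "finite (\<Union> (set_mset M))"
    using assms by (intro finite_Union) (auto simp: is_necklace_def finite_necklace_of)
  ultimately have "finite {length u | u N. N \<in># M \<and> u \<in> N}"
    by (rule finite_subset[OF _ finite_imageI])
  moreover have "0 \<notin> {length u | u N. N \<in># M \<and> u \<in> N}"
    using primitive_if_mem_necklace[OF assms] by (auto simp: primitive_def)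
  ultimately have "Lcm {length u | u N. N \<in># M \<and> u \<in> N} \<noteq> 0"
    by simp
  then show ?thesis
    by (simp add: table_lcm_def)
qed

lemma table_lcm_div_length_pos:
  assumes "\<forall>N\<in>#M. is_necklace N" and "N \<in># M" and "u \<in> N"
  shows "0 < table_lcm M div length u"
proof -
  have "0 < length u"
    using primitive_if_mem_necklace[OF assms] by (simp add: primitive_def)
  then show ?thesis
    using length_dvd_table_lcm[OF assms(2,3)] table_lcm_pos[OF assms(1)]
    by (simp add: dvd_imp_le div_greater_zero_iff)
qed

lemma table_rowE:
  assumes "\<forall>N\<in>#M. is_necklace N" and "x \<in> set (table M)"
  obtains u where "primitive u" and "0 < table_lcm M div length u"
    and "x = wpow u (table_lcm M div length u)"
proof -
  obtain N u where "N \<in># M" "u \<in> N" "x = wpow u (table_lcm M div length u)"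
    using assms(2) unfolding set_table by (rule mem_table_rowsE)
  then show thesis
    using that primitive_if_mem_necklace[OF assms(1)] table_lcm_div_length_pos[OF assms(1)]
    by blast
qed

lemma image_mset_sum_mset_fixed:
  "(\<And>x. x \<in># A \<Longrightarrow> image_mset f (F x) = F x)
    \<Longrightarrow> image_mset f (\<Sum>x\<in>#A. F x) = (\<Sum>x\<in>#A. F x)"
  by (induction A) auto

lemma image_mset_rotate1_table_rows:
  assumes "\<forall>N\<in>#M. is_necklace N"
  shows "image_mset rotate1 (table_rows M) = table_rows M"
proof -
  let ?row = "\<lambda>u. wpow u (table_lcm M div length u)"
  have "image_mset rotate1 (image_mset ?row (mset_set N)) = image_mset ?row (mset_set N)"
    if "N \<in># M" for N
  proof -
    obtain w where N: "N = necklace_of w"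
      using assms \<open>N \<in># M\<close> by (auto simp: is_necklace_def)
    have "image_mset rotate1 (image_mset ?row (mset_set N)) = image_mset ?row (image_mset rotate1 (mset_set N))"
      by (simp add: multiset.map_comp comp_def rotate_wpow[of 1, simplified])
    also have "image_mset rotate1 (mset_set N) = mset_set (rotate1 ` N)"
      by (rule image_mset_mset_set) (simp add: inj_on_subset[OF inj_rotate1])
    finally show ?thesis
      by (simp only: N rotate1_image_necklace_of)
  qed
  then show ?thesis
    unfolding table_rows_def by (rule image_mset_sum_mset_fixed)
qed

lemma mset_set_set_mset_if_count_le_1:
  assumes "\<And>x. count A x \<le> 1"
  shows "mset_set (set_mset A) = A"
proof (rule multiset_eqI)
  fix x
  show "count (mset_set (set_mset A)) x = count A x"
  proof (cases "x \<in># A")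
    case True
    then have "count (mset_set (set_mset A)) x = 1" and "0 < count A x"
      by simp_all
    with assms[of x] show ?thesis by linarith
  qed (simp add: not_in_iff)
qed

lemma count_le_1_if_distinct_table:
  assumes "\<forall>N\<in>#M. is_necklace N" and "distinct (table M)"
  shows "count M N \<le> 1"
proof (rule ccontr)
  let ?rows = "\<lambda>N. image_mset (\<lambda>u. wpow u (table_lcm M div length u)) (mset_set N)"
  assume "\<not> count M N \<le> 1"
  then have "{#N, N#} \<subseteq># M"
    by (auto simp: subseteq_mset_def)
  then obtain M' where M': "M = add_mset N (add_mset N M')"
    by (auto simp: mset_subset_eq_exists_conv)
  obtain w where "N = necklace_of w"
    using assms(1) M' by (auto simp: is_necklace_def)
  then have "w \<in># mset_set N"
    by (simp add: finite_necklace_of self_in_necklace_of)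
  then have "0 < count (?rows N) (wpow w (table_lcm M div length w))"
    by simp
  moreover have "table_rows M = ?rows N + ?rows N + (\<Sum>N\<in>#M'. ?rows N)"
    by (simp add: M' table_rows_def)
  ultimately have two: "2 \<le> count (table_rows M) (wpow w (table_lcm M div length w))"
    by (simp only: count_union)
  have "count (mset (table M)) r \<le> 1" for r
    using assms(2) by (simp add: distinct_count_atmost_1 del: mset_table)
  from this[of "wpow w (table_lcm M div length w)"] two show False
    by simp
qed

lemma sorted_wrt_roots_of_lyndon_rows:
  assumes "\<forall>N\<in>#M. is_necklace N" and "distinct (table M)"
  shows "sorted_wrt (<) (map root (filter (\<lambda>r. lyndon (root r)) (table M)))"
proof -
  have "sorted_wrt (<) (filter (\<lambda>r. lyndon (root r)) (table M))"
    using sorted_table assms(2) by (auto simp: strict_sorted_iff intro: sorted_wrt_filter)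
  moreover have "root x < root y"
    if "x \<in> set (table M)" "y \<in> set (table M)" "lyndon (root x)" "x < y" for x y
  proof -
    obtain u where u: "primitive u" "0 < table_lcm M div length u" "x = wpow u (table_lcm M div length u)"
      using assms(1) \<open>x \<in> set (table M)\<close> by (rule table_rowE)
    obtain v where v: "primitive v" "0 < table_lcm M div length v" "y = wpow v (table_lcm M div length v)"
      using assms(1) \<open>y \<in> set (table M)\<close> by (rule table_rowE)
    have "u < v"
    proof (rule lyndon_wpow_less_imp_less)
      show "lyndon u" using \<open>lyndon (root x)\<close> u by (simp add: root_wpow)
      have "length x = length y"
        using that(1,2) by (simp add: length_table_row)
      then show "length (wpow u (table_lcm M div length u)) = length (wpow v (table_lcm M div length v))"
        by (simp only: u(3)[symmetric] v(3)[symmetric])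
    qed (use u v \<open>x < y\<close> in \<open>auto simp: primitive_def\<close>)
    then show ?thesis using u v by (simp add: root_wpow)
  qed
  ultimately show ?thesis
    unfolding sorted_wrt_map by (rule sorted_wrt_mono_rel[rotated]) auto
qed

section \<open>The table with last column (0 1 ... k-1)^(k^(n-1))\<close>

text \<open>The cyclic right shift of the n-digit base-k numeral of j; by \<open>LF_BW\<close> below it is the
  LF-mapping of the last column (0 1 ... k-1)^(k^(n-1)).\<close>

definition cyclic_shift :: "nat \<Rightarrow> nat \<Rightarrow> nat \<Rightarrow> nat" where
  "cyclic_shift k n j = j mod k * k ^ (n - 1) + j div k"

lemma funpow_cyclic_shift:
  assumes "0 < k" and "t \<le> n"
  shows "(cyclic_shift k n ^^ t) j = j mod k ^ t * k ^ (n - t) + j div k ^ t"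
  using assms(2)
proof (induction t)
  case (Suc t)
  define q where "q = j div k ^ t"
  have "n - t = Suc (n - Suc t)" and "n - 1 = t + (n - Suc t)"
    using Suc.prems by simp_all
  then have split: "k ^ (n - t) = k * k ^ (n - Suc t)" "k ^ (n - 1) = k ^ t * k ^ (n - Suc t)"
    by (simp_all only: power_Suc power_add)
  have "(cyclic_shift k n ^^ Suc t) j = cyclic_shift k n (k * (j mod k ^ t * k ^ (n - Suc t)) + q)"
    using Suc by (simp add: split q_def mult.assoc mult.left_commute)
  also have "\<dots> = q mod k * k ^ (n - 1) + (j mod k ^ t * k ^ (n - Suc t) + q div k)"
    using assms(1) by (simp add: cyclic_shift_def)
  also have "\<dots> = j mod k ^ Suc t * k ^ (n - Suc t) + j div k ^ Suc t"
  proof -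
    have "j mod k ^ Suc t = k ^ t * (q mod k) + j mod k ^ t" "j div k ^ Suc t = q div k"
      by (simp_all only: q_def power_Suc2 mod_mult2_eq div_mult2_eq)
    then show ?thesis
      unfolding split(2) by (simp add: algebra_simps)
  qed
  finally show ?case .
qed simp

lemma funpow_cyclic_shift_mod:
  assumes "0 < k" and "t < n"
  shows "(cyclic_shift k n ^^ t) j mod k = j div k ^ t mod k"
proof -
  have "n - t = Suc (n - Suc t)"
    using assms(2) by simp
  then have "k ^ (n - t) = k * k ^ (n - Suc t)"
    by simp
  then have "(cyclic_shift k n ^^ t) j = k * (j mod k ^ t * k ^ (n - Suc t)) + j div k ^ t"
    using assms by (simp add: funpow_cyclic_shift mult.left_commute)
  then show ?thesis by simp
qed

lemma funpow_cyclic_shift_self: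
  "0 < k \<Longrightarrow> j < k ^ n \<Longrightarrow> (cyclic_shift k n ^^ n) j = j"
  by (simp add: funpow_cyclic_shift)

lemma length_filter_less_wpow_upt:
  assumes "a \<le> k"
  shows "length (filter (\<lambda>c. c < a) (wpow [0..<k] K)) = a * K"
proof -
  have "filter (\<lambda>c. c < a) [0..<k] = [0..<a]"
    using assms by (induction k) (auto simp: le_Suc_eq)
  then show ?thesis by (simp add: filter_wpow)
qed

lemma length_filter_eq_take_wpow_upt:
  assumes "j < K * k"
  shows "length (filter (\<lambda>c. c = j mod k) (take j (wpow [0..<k] K))) = j div k"
proof -
  have "0 < k" using assms by (cases k) auto
  have "j div k < K"
    using assms \<open>0 < k\<close> by (simp add: div_less_iff_less_mult)
  then have "wpow [0..<k] K = wpow [0..<k] (j div k) @ [0..<k] @ wpow [0..<k] (K - Suc (j div k))"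
    using wpow_add[of "[0..<k]" "j div k" "Suc (K - Suc (j div k))"] by (simp add: wpow_Suc)
  moreover have "j - j div k * k = j mod k" "j div k * k \<le> j"
    by (simp_all add: minus_div_mult_eq_mod)
  ultimately have "take j (wpow [0..<k] K) = wpow [0..<k] (j div k) @ [0..<j mod k]"
    using \<open>0 < k\<close> by simp
  moreover have "filter (\<lambda>c. c = a) [0..<k] = [a]" if "a < k" for a
    using that by (induction k) (auto simp: less_Suc_eq filter_empty_conv)
  then have "filter (\<lambda>c. c = j mod k) [0..<k] = [j mod k]"
    using \<open>0 < k\<close> by simp
  ultimately show ?thesis
    by (simp add: filter_wpow)
qed

locale bw_upt_power =
  fixes k n :: nat and M :: "nat list set multiset"
  assumes k_ge_2: "k \<ge> 2" and n_ge_1: "n \<ge> 1"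
    and necklaces: "\<forall>N\<in>#M. is_necklace N \<and> (\<forall>u\<in>N. set u \<subseteq> {0..<k})"
    and BW_eq: "BW M = wpow [0..<k] (k ^ (n - 1))"
begin

lemma is_necklace: "\<forall>N\<in>#M. is_necklace N"
  using necklaces by blast

lemma k_pos: "0 < k"
  using k_ge_2 by simp

lemma power_minus_1_times_k: "k ^ (n - 1) * k = k ^ n"
  using n_ge_1 by (simp flip: power_Suc2)

lemma length_BW: "length (BW M) = k ^ n"
  using power_minus_1_times_k by (simp add: BW_eq)

lemma nth_BW: "i < k ^ n \<Longrightarrow> BW M ! i = i mod k"
  using length_BW k_pos by (simp add: BW_eq nth_wpow)

lemma length_table: "length (table M) = k ^ n"
  using length_BW by (simp add: BW_def)

lemma length_table_nth: "j < k ^ n \<Longrightarrow> length (table M ! j) = table_lcm M"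
  using length_table by (simp add: length_table_row)

lemma last_table_nth: "i < k ^ n \<Longrightarrow> last (table M ! i) = i mod k"
  using nth_BW length_table by (simp add: BW_def)

lemma distinct_table: "distinct (table M)"
proof -
  have "table M ! i \<noteq> table M ! Suc i" if "Suc i < k ^ n" for i
    using last_table_nth[of i] last_table_nth[of "Suc i"] that k_ge_2
    by (auto simp: mod_Suc split: if_splits)
  then have "table M ! i < table M ! Suc i" if "Suc i < k ^ n" for i
    using that sorted_table[of M] length_table by (simp add: sorted_iff_nth_Suc order.order_iff_strict)
  then have "sorted_wrt (<) (table M)"
    using length_table by (simp add: sorted_wrt_iff_nth_Suc_transp)
  then show ?thesis
    by (simp add: strict_sorted_iff)
qed

lemma LF_BW:
  assumes "j < k ^ n"
  shows "LF (BW M) j = cyclic_shift k n j"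
proof -
  have "LF (BW M) j
      = length (filter (\<lambda>a. a < j mod k) (BW M)) + length (filter (\<lambda>a. a = j mod k) (take j (BW M)))"
    using assms by (simp add: LF_def nth_BW)
  also have "\<dots> = j mod k * k ^ (n - 1) + j div k"
    unfolding BW_eq using k_pos assms power_minus_1_times_k
    by (simp add: length_filter_less_wpow_upt length_filter_eq_take_wpow_upt)
  finally show ?thesis
    by (simp add: cyclic_shift_def)
qed

lemma table_nth_cyclic_shift:
  assumes "j < k ^ n"
  shows "cyclic_shift k n j < k ^ n \<and> rotate1 (table M ! cyclic_shift k n j) = table M ! j"
proof -
  have "\<forall>y\<in>set (table M). length y = table_lcm M"
    by (simp add: length_table_row)
  moreover have "image_mset rotate1 (mset (table M)) = mset (table M)"
    using is_necklace by (simp add: image_mset_rotate1_table_rows)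
  ultimately have "LF (BW M) j < k ^ n \<and> table M ! LF (BW M) j = last (table M ! j) # butlast (table M ! j)"
    using LF_sorted_rotation_closed[OF sorted_table[of M] _ table_lcm_pos[OF is_necklace]] assms length_table
    by (simp add: BW_def)
  moreover have "table M ! j \<noteq> []"
    using assms length_table_nth table_lcm_pos[OF is_necklace] by fastforce
  ultimately show ?thesis
    using assms by (simp add: LF_BW)
qed

lemma table_nth_funpow_cyclic_shift:
  assumes "j < k ^ n"
  shows "(cyclic_shift k n ^^ t) j < k ^ n \<and> table M ! j = rotate t (table M ! (cyclic_shift k n ^^ t) j)"
proof (induction t)
  case (Suc t)
  let ?i = "(cyclic_shift k n ^^ t) j"
  have "table M ! j = rotate t (rotate1 (table M ! cyclic_shift k n ?i))"
    using Suc table_nth_cyclic_shift by simp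
  then show ?case
    using Suc table_nth_cyclic_shift by (simp add: rotate1_rotate_swap)
qed (simp add: assms)

lemma table_nth_nth:
  assumes "j < k ^ n" and "t < table_lcm M" and "t < n"
  shows "table M ! j ! (table_lcm M - 1 - t) = j div k ^ t mod k"
proof -
  define i where "i = (cyclic_shift k n ^^ t) j"
  have i: "i < k ^ n" "table M ! j = rotate t (table M ! i)"
    using table_nth_funpow_cyclic_shift[OF assms(1)] by (simp_all add: i_def)
  then have "table M ! j ! (table_lcm M - 1 - t) = table M ! i ! (table_lcm M - 1)"
    using assms(2) length_table_nth by (simp add: nth_rotate)
  also have "\<dots> = i mod k"
    using i(1) assms(2) length_table_nth[OF i(1)] last_table_nth[OF i(1)]
    by (metis last_conv_nth list.size(3) not_less_zero)
  also have "\<dots> = j div k ^ t mod k"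
    using funpow_cyclic_shift_mod[OF k_pos assms(3)] by (simp add: i_def)
  finally show ?thesis .
qed

lemma table_lcm_dvd: "table_lcm M dvd n"
  unfolding table_lcm_def
proof (rule Lcm_least, safe)
  fix N u assume "N \<in># M" "u \<in> N"
  then have u: "primitive u" "0 < table_lcm M div length u"
    using is_necklace by (simp_all add: primitive_if_mem_necklace table_lcm_div_length_pos)
  have "finite N"
    using is_necklace \<open>N \<in># M\<close> by (auto simp: is_necklace_def finite_necklace_of)
  then have "wpow u (table_lcm M div length u) \<in> set (table M)"
    unfolding set_table using \<open>N \<in># M\<close> \<open>u \<in> N\<close> by (simp add: wpow_mem_table_rows)
  then obtain j where "j < k ^ n" "table M ! j = wpow u (table_lcm M div length u)"
    by (metis in_set_conv_nth length_table)
  moreover have "rotate n (table M ! j) = table M ! j"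
    using table_nth_funpow_cyclic_shift[OF \<open>j < k ^ n\<close>, of n]
    by (simp add: funpow_cyclic_shift_self[OF k_pos \<open>j < k ^ n\<close>])
  ultimately show "length u dvd n"
    using u by (metis primitive_wpow_rotate_self_dvd)
qed

lemma table_lcm_eq: "table_lcm M = n"
proof (rule ccontr)
  let ?l = "table_lcm M"
  assume "?l \<noteq> n"
  moreover have "?l \<le> n"
    using table_lcm_dvd n_ge_1 by (simp add: dvd_imp_le)
  ultimately have "?l < n" by simp
  then have "0 < k ^ ?l" "k ^ ?l < k ^ n"
    using k_ge_2 by (simp_all add: power_strict_increasing)
  have "table M ! 0 = table M ! (k ^ ?l)"
  proof (rule nth_equalityI)
    show "length (table M ! 0) = length (table M ! (k ^ ?l))"
      using \<open>k ^ ?l < k ^ n\<close> k_pos by (simp add: length_table_nth)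
    fix i assume "i < length (table M ! 0)"
    then have "i < ?l"
      using k_pos by (simp add: length_table_nth)
    define t where "t = ?l - 1 - i"
    have t: "i = ?l - 1 - t" "t < ?l" "t < n"
      using \<open>i < ?l\<close> \<open>?l < n\<close> by (auto simp: t_def)
    have "?l - t = Suc (?l - Suc t)"
      using t(2) by simp
    then have "k ^ ?l div k ^ t = k * k ^ (?l - Suc t)"
      using t(2) k_pos by (metis less_imp_le_nat not_gr0 power_Suc power_diff)
    then have "k ^ ?l div k ^ t mod k = 0"
      by simp
    then show "table M ! 0 ! i = table M ! (k ^ ?l) ! i"
      using t \<open>0 < k ^ ?l\<close> \<open>k ^ ?l < k ^ n\<close> table_nth_nth[of 0 t] table_nth_nth[of "k ^ ?l" t]
      by simp
  qed
  then have "0 = k ^ ?l"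
    using nth_eq_iff_index_eq[OF distinct_table] \<open>0 < k ^ ?l\<close> \<open>k ^ ?l < k ^ n\<close> length_table
    by (metis order.strict_trans)
  with \<open>0 < k ^ ?l\<close> show False
    by simp
qed

lemma table_nth_eq_digits:
  assumes "j < k ^ n"
  shows "table M ! j = digits k n j"
proof (rule nth_equalityI)
  show "length (table M ! j) = length (digits k n j)"
    using assms by (simp add: length_table_nth table_lcm_eq digits_def)
  fix i assume "i < length (table M ! j)"
  then have "i < n"
    using assms by (simp add: length_table_nth table_lcm_eq)
  then show "table M ! j ! i = digits k n j ! i"
    using table_nth_nth[OF assms, of "n - 1 - i"] by (simp add: table_lcm_eq digits_def)
qed

lemma table_eq_digits: "table M = map (digits k n) [0..<k ^ n]"
  by (rule nth_equalityI) (simp_all add: length_table table_nth_eq_digits)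

lemma set_table_eq: "set (table M) = {xs. set xs \<subseteq> {0..<k} \<and> length xs = n}"
proof (rule card_subset_eq)
  show "finite {xs. set xs \<subseteq> {0..<k} \<and> length xs = n}"
    by (simp add: finite_lists_length_eq)
  have "set (digits k n j) \<subseteq> {0..<k}" "length (digits k n j) = n" for j
    using k_pos by (auto simp: digits_def)
  then show "set (table M) \<subseteq> {xs. set xs \<subseteq> {0..<k} \<and> length xs = n}"
    unfolding table_eq_digits by auto
  show "card (set (table M)) = card {xs. set xs \<subseteq> {0..<k} \<and> length xs = n}"
    using distinct_card[OF distinct_table] by (simp add: length_table card_lists_length_eq)
qed

lemma lyndon_necklace_if_mem:
  assumes "N \<in># M"
  obtains w where "N = necklace_of w" and "lyndon w" and "set w \<subseteq> {0..<k}" and "length w dvd n"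
proof -
  obtain w where w: "primitive w" "N = necklace_of w"
    using is_necklace assms by (auto simp: is_necklace_def)
  have "Min N \<in> N"
    using w(2) finite_necklace_of self_in_necklace_of by (metis Min_in empty_iff)
  moreover have "lyndon (Min N)"
    using w by (simp add: lyndon_Min_necklace_of)
  moreover have "set (Min N) \<subseteq> {0..<k}"
    using necklaces assms \<open>Min N \<in> N\<close> by blast
  moreover have "length (Min N) dvd n"
    using length_dvd_table_lcm[OF assms \<open>Min N \<in> N\<close>] by (simp add: table_lcm_eq)
  ultimately show thesis
    using that eq_necklace_of_if_mem[OF is_necklace assms] by blast
qed

lemma necklace_of_mem_if_lyndon:
  assumes "lyndon w" and "set w \<subseteq> {0..<k}" and "length w dvd n"
  shows "necklace_of w \<in># M"
proof -
  have "primitive w" and "0 < n div length w"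
    using assms n_ge_1 by (auto simp: lyndon_def primitive_def dvd_imp_le div_greater_zero_iff)
  have "wpow w (n div length w) \<in> set (table M)"
    using assms(2,3) set_wpow_subset[of w "n div length w"] by (simp add: set_table_eq)
  then obtain N u where "N \<in># M" "u \<in> N" "wpow u (n div length u) = wpow w (n div length w)"
    unfolding set_table table_lcm_eq[symmetric] by (metis mem_table_rowsE)
  moreover have "primitive u" and "0 < n div length u"
    using \<open>N \<in># M\<close> \<open>u \<in> N\<close> is_necklace table_lcm_div_length_pos[of M N u]
    by (simp_all add: primitive_if_mem_necklace table_lcm_eq)
  ultimately have "u = w"
    using \<open>primitive w\<close> \<open>0 < n div length w\<close> by (metis primitive_wpow_inject)
  then show ?thesis
    using eq_necklace_of_if_mem[OF is_necklace \<open>N \<in># M\<close> \<open>u \<in> N\<close>] \<open>N \<in># M\<close> by simp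
qed

lemma set_mset_eq_lyndon_necklaces:
  "set_mset M = {necklace_of w | w. lyndon w \<and> set w \<subseteq> {0..<k} \<and> length w dvd n}"
  by (blast elim: lyndon_necklace_if_mem intro: necklace_of_mem_if_lyndon)

lemma M_eq_lyndon_necklaces:
  "M = mset_set {necklace_of w | w. lyndon w \<and> set w \<subseteq> {0..<k} \<and> length w dvd n}"
  using mset_set_set_mset_if_count_le_1[of M] count_le_1_if_distinct_table[OF is_necklace distinct_table]
  by (simp add: set_mset_eq_lyndon_necklaces)

end

theorem theorem3p8:
  fixes k n :: nat and M :: "nat list set multiset"
  assumes "k \<ge> 2" and "n \<ge> 1"
    and "\<forall>N\<in>#M. is_necklace N \<and> (\<forall>u\<in>N. set u \<subseteq> {0..<k})"
    and "BW M = wpow [0..<k] (k ^ (n - 1))"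
  shows "(\<forall>r\<in>set (table M). length r = n)
       \<and> table M = map (digits k n) [0..<k ^ n]
       \<and> M = mset_set {necklace_of w | w. lyndon w \<and> set w \<subseteq> {0..<k} \<and> length w dvd n}
       \<and> sorted_wrt (<) (map root (filter (\<lambda>r. lyndon (root r)) (table M)))"
proof -
  interpret bw_upt_power k n M
    using assms by unfold_locales
  have "\<forall>r\<in>set (table M). length r = n"
    by (simp add: length_table_row table_lcm_eq)
  then show ?thesis
    using table_eq_digits M_eq_lyndon_necklaces sorted_wrt_roots_of_lyndon_rows[OF is_necklace distinct_table]
    by blast
qed

end
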